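(* Under the assumptions of Theorem 2 (the case $\varepsilon=0$), let $(u,v)$ be a classical solution on $[0,T)$ with $u>0$. Then $\int_0^1 v(x,t)\,dx=\overline v:=\int_0^1 v_0(x)\,dx$ for all $t\in[0,T)$, and there exists $C>0$ independent of $t$ and $T$ such that for all $t\in[0,T)$ \[ E(u,\alpha)(t)+\|(v-\overline v)(t)\|^2+\int_0^t\!\!\int_0^1\frac{(u_x)^2}{u}\,dx\,d\tau\le C . \]
   Context: Setting of Theorem 2: on $(0,1)\times(0,\infty)$, $u_t-(uv)_x=u_{xx}$, $v_t-u_x=0$, $(u,v)(x,0)=(u_0,v_0)(x)$, $u(0,t)=u(1,t)=\alpha(t)$ (no boundary condition on $v$); $u_0>0$, $(u_0,v_0)\in[H^2((0,1))]^2$ compatible with the boundary data; $\alpha$ smooth on $[0,\infty)$ with $\alpha\ge\underline\alpha>0$ and $\alpha'\in W^{1,1}(\mathbb{R}_+)$. The relative entropy is $E(u,\alpha)(t)=\int_0^1\big[(u\ln u-u)-(\alpha\ln\alpha-\alpha)-(u-\alpha)\ln\alpha\big]dx$. $\|\cdot\|$ is the $L^2((0,1))$ norm. *)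

theory Defs
  imports "HOL-Analysis.Analysis"
begin

definition test_fun01 :: "(real \<Rightarrow> real) \<Rightarrow> bool" where
  "test_fun01 \<phi> \<longleftrightarrow>
     (\<forall>k x. ((deriv ^^ k) \<phi>) differentiable (at x)) \<and>
     (\<exists>a b. 0 < a \<and> a \<le> b \<and> b < 1 \<and> (\<forall>x. x \<notin> {a..b} \<longrightarrow> \<phi> x = 0))"

definition L2_01 :: "(real \<Rightarrow> real) \<Rightarrow> bool" where
  "L2_01 f \<longleftrightarrow> set_borel_measurable lborel {0<..<1} f \<and>
                 set_integrable lborel {0<..<1} (\<lambda>x. (f x)\<^sup>2)"

definition weak_deriv01 :: "(real \<Rightarrow> real) \<Rightarrow> (real \<Rightarrow> real) \<Rightarrow> bool" where
  "weak_deriv01 f g \<longleftrightarrow>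
     (\<forall>\<phi>. test_fun01 \<phi> \<longrightarrow>
        (LBINT x:{0<..<1}. f x * deriv \<phi> x) = - (LBINT x:{0<..<1}. g x * \<phi> x))"

definition H2_01 :: "(real \<Rightarrow> real) \<Rightarrow> bool" where
  "H2_01 f \<longleftrightarrow> (\<exists>g1 g2. L2_01 f \<and> L2_01 g1 \<and> L2_01 g2 \<and>
                          weak_deriv01 f g1 \<and> weak_deriv01 g1 g2)"

text \<open>Classical solution on [0,1] x [0,T) of
  u_t - (u v)_x = u_xx,  v_t - u_x = 0,  (u,v)(x,0) = (u0,v0)(x),  u(0,t) = u(1,t) = alpha(t).
  Functions are written u x t.  Regularity: u, v continuous on [0,1] x [0,T);
  u_x, u_xx, u_t, v_x, v_t exist and are continuous on [0,1] x (0,T).\<close>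
definition classical_solution ::
  "real \<Rightarrow> (real \<Rightarrow> real) \<Rightarrow> (real \<Rightarrow> real) \<Rightarrow> (real \<Rightarrow> real) \<Rightarrow>
   (real \<Rightarrow> real \<Rightarrow> real) \<Rightarrow> (real \<Rightarrow> real \<Rightarrow> real) \<Rightarrow> bool" where
  "classical_solution T u0 v0 \<alpha> u v \<longleftrightarrow>
     continuous_on ({0..1} \<times> {0..<T}) (\<lambda>(x,t). u x t) \<and>
     continuous_on ({0..1} \<times> {0..<T}) (\<lambda>(x,t). v x t) \<and>
     (\<exists>ux uxx ut vx vt.
        (\<forall>x\<in>{0..1}. \<forall>t\<in>{0<..<T}.
           ((\<lambda>y. u y t) has_real_derivative ux x t) (at x within {0..1}) \<and>
           ((\<lambda>y. ux y t) has_real_derivative uxx x t) (at x within {0..1}) \<and>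
           ((\<lambda>s. u x s) has_real_derivative ut x t) (at t) \<and>
           ((\<lambda>y. v y t) has_real_derivative vx x t) (at x within {0..1}) \<and>
           ((\<lambda>s. v x s) has_real_derivative vt x t) (at t)) \<and>
        continuous_on ({0..1} \<times> {0<..<T}) (\<lambda>(x,t). ux x t) \<and>
        continuous_on ({0..1} \<times> {0<..<T}) (\<lambda>(x,t). uxx x t) \<and>
        continuous_on ({0..1} \<times> {0<..<T}) (\<lambda>(x,t). ut x t) \<and>
        continuous_on ({0..1} \<times> {0<..<T}) (\<lambda>(x,t). vx x t) \<and>
        continuous_on ({0..1} \<times> {0<..<T}) (\<lambda>(x,t). vt x t) \<and>
        (\<forall>x\<in>{0<..<1}. \<forall>t\<in>{0<..<T}.
           ut x t - (ux x t * v x t + u x t * vx x t) = uxx x t \<and>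
           vt x t - ux x t = 0)) \<and>
     (\<forall>x\<in>{0..1}. u x 0 = u0 x \<and> v x 0 = v0 x) \<and>
     (\<forall>t\<in>{0..<T}. u 0 t = \<alpha> t \<and> u 1 t = \<alpha> t)"

definition rel_entropy :: "(real \<Rightarrow> real) \<Rightarrow> real \<Rightarrow> real" where
  "rel_entropy w a = (LBINT x:{0..1}.
     (w x * ln (w x) - w x) - (a * ln a - a) - (w x - a) * ln a)"

definition L2norm_sq01 :: "(real \<Rightarrow> real) \<Rightarrow> real" where
  "L2norm_sq01 f = (LBINT x:{0..1}. (f x)\<^sup>2)"

end

theory Submission
  imports Defs
begin

text \<open>The energy \<open>E(u,\<alpha>) + \<parallel>v - c\<parallel>\<^sup>2/2\<close> is dissipated up to the boundary forcing.
  Multiplying the \<open>u\<close>-equation by \<open>ln u - ln \<alpha>\<close>, which vanishes at \<open>x = 0, 1\<close>, and the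
  \<open>v\<close>-equation by \<open>v - c\<close>, the convective terms cancel after integration by parts and
  \<open>d/dt energy = - \<integral> u\<^sub>x\<^sup>2/u - (\<integral> u - \<alpha>) \<alpha>'/\<alpha>\<close>. The pointwise bound
  \<open>|u - \<alpha>| \<le> (entropy density) + e\<^sup>2 \<alpha>\<close> makes the forcing at most
  \<open>|\<alpha>'|/\<alpha>\<^sub>l\<^sub>o\<^sub>w (energy + e\<^sup>2 \<alpha>\<^sub>l\<^sub>o\<^sub>w)\<close>, and Gronwall's inequality with the
  integrable weight \<open>|\<alpha>'|\<close> bounds energy plus accumulated dissipation uniformly in time.
  Since the solution is differentiable only for \<open>t > 0\<close>, this is done on \<open>[s, t]\<close> and then
  \<open>s \<rightarrow> 0\<close>. The mean of \<open>v\<close> is conserved because \<open>v\<^sub>t = u\<^sub>x\<close> and \<open>u\<close> takes the same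
  value at both ends.\<close>

lemma set_integral_Icc_eq_integral:
  fixes f :: "real \<Rightarrow> real"
  assumes "continuous_on {a..b} f"
  shows "(LBINT x:{a..b}. f x) = integral {a..b} f"
  by (rule set_borel_integral_eq_integral(2)[OF borel_integrable_atLeastAtMost'[OF assms]])

lemma continuous_on_section:
  assumes "continuous_on (A \<times> B) (\<lambda>(x, t). f x t)" and "t \<in> B"
  shows "continuous_on A (\<lambda>x. f x t)"
proof -
  have "(\<lambda>x. (x, t)) ` A \<subseteq> A \<times> B" using assms(2) by auto
  then show ?thesis
    using continuous_on_compose2[OF assms(1) continuous_on_Pair[OF continuous_on_id continuous_on_const]]
    by simp
qed

lemma integral_Icc_cong_interior:
  fixes f g :: "real \<Rightarrow> real"
  assumes "\<And>x. a < x \<Longrightarrow> x < b \<Longrightarrow> f x = g x"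
  shows "integral {a..b} f = integral {a..b} g"
  using integral_open_interval_real[of a b f] integral_open_interval_real[of a b g]
    integral_cong[of "{a<..<b}" f g] assms by simp

lemma has_integral_derivative_eq_zero:
  fixes f f' :: "real \<Rightarrow> real"
  assumes "a \<le> b" "f a = f b"
    and "\<And>x. x \<in> {a..b} \<Longrightarrow> (f has_real_derivative f' x) (at x within {a..b})"
  shows "(f' has_integral 0) {a..b}"
  using fundamental_theorem_of_calculus[of a b f f'] assms
  by (simp add: has_real_derivative_iff_has_vector_derivative)

lemma has_real_derivative_integral_Icc_param:
  fixes f ft :: "real \<Rightarrow> real \<Rightarrow> real"
  assumes U: "open U" "convex U" "t \<in> U"
    and deriv: "\<And>s x. s \<in> U \<Longrightarrow> x \<in> {a..b} \<Longrightarrow> ((\<lambda>s. f x s) has_real_derivative ft x s) (at s)"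
    and cont: "\<And>s. s \<in> U \<Longrightarrow> continuous_on {a..b} (\<lambda>x. f x s)"
    and cont_ft: "continuous_on ({a..b} \<times> U) (\<lambda>(x, s). ft x s)"
  shows "((\<lambda>s. integral {a..b} (\<lambda>x. f x s)) has_real_derivative integral {a..b} (\<lambda>x. ft x t)) (at t)"
proof -
  have "((\<lambda>s. integral (cbox a b) (\<lambda>x. f x s)) has_real_derivative integral (cbox a b) (\<lambda>x. ft x t))
          (at t within U)"
  proof (rule leibniz_rule_field_derivative[where f="\<lambda>s x. f x s" and fx="\<lambda>s x. ft x s"])
    show "((\<lambda>s. f x s) has_field_derivative ft x s) (at s within U)" if "s \<in> U" "x \<in> cbox a b" for s x
      using deriv that by (auto intro: has_field_derivative_at_within simp: cbox_interval)
    show "(\<lambda>x. f x s) integrable_on cbox a b" if "s \<in> U" for s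
      using cont[OF that] by (simp add: cbox_interval integrable_continuous_real)
    show "continuous_on (U \<times> cbox a b) (\<lambda>(s, x). ft x s)"
      using continuous_on_swap_args[OF cont_ft] by (simp add: cbox_interval)
  qed (use U in auto)
  then show ?thesis using at_within_open[OF U(3,1)] by (simp add: cbox_interval)
qed

lemma continuous_on_integral_Icc_param:
  fixes f :: "real \<Rightarrow> 'a::topological_space \<Rightarrow> real"
  assumes "continuous_on ({a..b} \<times> U) (\<lambda>(x, s). f x s)"
  shows "continuous_on U (\<lambda>s. integral {a..b} (\<lambda>x. f x s))"
  using integral_continuous_on_param[of U a b "\<lambda>s x. f x s"] continuous_on_swap_args[OF assms]
  by (simp add: cbox_interval)

definition entropy_density :: "real \<Rightarrow> real \<Rightarrow> real" where
  "entropy_density w a = (w * ln w - w) - (a * ln a - a) - (w - a) * ln a"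

lemma entropy_density_alt: "entropy_density w a = w * (ln w - ln a) - w + a"
  by (simp add: entropy_density_def algebra_simps)

lemma mult_ln_diff_ge_diff:
  fixes w a :: real
  assumes "0 < w" "0 < a"
  shows "w * (ln w - ln a) \<ge> w - a"
proof -
  have "ln (a / w) \<le> a / w - 1" using assms by (intro ln_le_minus_one) simp
  then have "w * (1 - a / w) \<le> w * (ln w - ln a)"
    using assms by (intro mult_left_mono) (auto simp: ln_div)
  moreover have "w * (1 - a / w) = w - a" using assms by (simp add: field_simps)
  ultimately show ?thesis by simp
qed

lemma entropy_density_nonneg: "0 < w \<Longrightarrow> 0 < a \<Longrightarrow> 0 \<le> entropy_density w a"
  using mult_ln_diff_ge_diff[of w a] by (simp add: entropy_density_alt)

lemma abs_diff_le_entropy_density: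
  fixes w a :: real
  assumes "0 < w" "0 < a"
  shows "\<bar>w - a\<bar> \<le> entropy_density w a + exp 2 * a"
proof (cases "w \<le> exp 2 * a")
  case True
  have "a \<le> exp 2 * a" using assms by simp
  then show ?thesis
    using True assms entropy_density_nonneg[OF assms] by linarith
next
  case False
  then have "ln (exp 2 * a) \<le> ln w" using assms by simp
  then have "2 + ln a \<le> ln w" using assms by (simp add: ln_mult)
  then have "w * 2 \<le> w * (ln w - ln a)" using assms by (intro mult_left_mono) auto
  moreover have "\<bar>w - a\<bar> \<le> w + a" "0 \<le> exp 2 * a" using assms by auto
  ultimately show ?thesis unfolding entropy_density_alt by linarith
qed

lemma has_real_derivative_entropy_density:
  assumes "(f has_real_derivative f') (at t)" "(g has_real_derivative g') (at t)"
    and "0 < f t" "0 < g t"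
  shows "((\<lambda>s. entropy_density (f s) (g s)) has_real_derivative
           f' * (ln (f t) - ln (g t)) - (f t - g t) * (g' / g t)) (at t)"
  unfolding entropy_density_def
  by (rule derivative_eq_intros assms refl | use assms in \<open>simp add: field_simps\<close>)+

lemma rel_entropy_eq_integral:
  assumes "continuous_on {0..1} w" "\<And>x. x \<in> {0..1} \<Longrightarrow> 0 < w x"
  shows "rel_entropy w a = integral {0..1} (\<lambda>x. entropy_density (w x) a)"
  unfolding rel_entropy_def entropy_density_def
  using assms by (intro set_integral_Icc_eq_integral continuous_intros) force+

lemma rel_entropy_cong:
  "(\<And>x. x \<in> {0..1} \<Longrightarrow> w x = w' x) \<Longrightarrow> rel_entropy w a = rel_entropy w' a"
  unfolding rel_entropy_def by (rule set_lebesgue_integral_cong) auto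

lemma L2norm_sq01_eq_integral:
  "continuous_on {0..1} f \<Longrightarrow> L2norm_sq01 f = integral {0..1} (\<lambda>x. (f x)\<^sup>2)"
  unfolding L2norm_sq01_def by (intro set_integral_Icc_eq_integral continuous_intros)

lemma L2norm_sq01_cong:
  "(\<And>x. x \<in> {0..1} \<Longrightarrow> f x = f' x) \<Longrightarrow> L2norm_sq01 f = L2norm_sq01 f'"
  unfolding L2norm_sq01_def by (rule set_lebesgue_integral_cong) auto

lemma rel_entropy_nonneg:
  assumes "\<And>x. x \<in> {0..1} \<Longrightarrow> 0 < w x" "0 < a"
  shows "0 \<le> rel_entropy w a"
  unfolding rel_entropy_def set_lebesgue_integral_def
  using assms entropy_density_nonneg
  by (intro integral_nonneg_AE AE_I2) (auto simp: entropy_density_def split: split_indicator)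

lemma L2norm_sq01_nonneg: "0 \<le> L2norm_sq01 f"
  unfolding L2norm_sq01_def set_lebesgue_integral_def
  by (intro integral_nonneg_AE AE_I2) (auto split: split_indicator)

lemma integral_abs_le_set_integral_Ici:
  fixes f :: "real \<Rightarrow> real"
  assumes "set_integrable lborel {0..} f" "continuous_on {s..t} f" "0 \<le> s"
  shows "integral {s..t} (\<lambda>x. \<bar>f x\<bar>) \<le> (LBINT x:{0..}. \<bar>f x\<bar>)"
proof -
  have int: "set_integrable lborel {0..} (\<lambda>x. \<bar>f x\<bar>)" by (rule set_integrable_abs[OF assms(1)])
  moreover have "set_integrable lborel {s..t} (\<lambda>x. \<bar>f x\<bar>)"
    by (rule set_integrable_subset[OF int]) (use assms(3) in auto)
  ultimately have "(LBINT x:{s..t}. \<bar>f x\<bar>) \<le> (LBINT x:{0..}. \<bar>f x\<bar>)"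
    unfolding set_lebesgue_integral_def set_integrable_def
    using assms(3) by (intro integral_mono) (auto split: split_indicator)
  then show ?thesis
    by (simp add: set_integral_Icc_eq_integral continuous_on_rabs[OF assms(2)])
qed

text \<open>The weight \<open>exp (- \<integral>\<^sub>s\<^sup>r a)\<close> turns the differential inequality into the monotonicity of
  \<open>exp (- \<integral>\<^sub>s\<^sup>r a) (G r + \<kappa>) + \<integral>\<^sub>s\<^sup>r exp (- \<integral>\<^sub>s\<^sup>\<rho> a) D \<rho> d\<rho>\<close>.\<close>
lemma gronwall_dissipation:
  fixes G G' a D :: "real \<Rightarrow> real" and \<kappa> :: real
  assumes "s \<le> t" and cont_G: "continuous_on {s..t} G"
    and G': "\<And>r. s < r \<Longrightarrow> r < t \<Longrightarrow> (G has_real_derivative G' r) (at r)"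
    and ineq: "\<And>r. s < r \<Longrightarrow> r < t \<Longrightarrow> G' r + D r \<le> a r * (G r + \<kappa>)"
    and cont_a: "continuous_on {s..t} a" and cont_D: "continuous_on {s..t} D"
    and a_nonneg: "\<And>r. r \<in> {s..t} \<Longrightarrow> 0 \<le> a r"
    and D_nonneg: "\<And>r. r \<in> {s..t} \<Longrightarrow> 0 \<le> D r"
  shows "G t + \<kappa> + integral {s..t} D \<le> exp (integral {s..t} a) * (G s + \<kappa>)"
proof -
  define A where "A r = integral {s..r} a" for r
  define H where "H r = exp (- A r) * (G r + \<kappa>) + integral {s..r} (\<lambda>\<rho>. exp (- A \<rho>) * D \<rho>)" for r
  have A': "(A has_real_derivative a r) (at r within {s..t})" if "r \<in> {s..t}" for r
    unfolding A_def by (rule integral_has_real_derivative[OF cont_a that])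
  then have cont_A: "continuous_on {s..t} A" by (rule DERIV_continuous_on)
  have cont_weighted: "continuous_on {s..t} (\<lambda>\<rho>. exp (- A \<rho>) * D \<rho>)"
    by (intro continuous_intros cont_A cont_D)
  have "H t \<le> H s"
  proof (rule DERIV_nonpos_imp_decreasing_open[OF \<open>s \<le> t\<close>])
    fix r assume r: "s < r" "r < t"
    then have at_r: "at r within {s..t} = at r" by (intro at_within_Icc_at)
    have "(H has_real_derivative
            exp (- A r) * G' r - a r * exp (- A r) * (G r + \<kappa>) + exp (- A r) * D r) (at r)"
      unfolding H_def using A'[of r] integral_has_real_derivative[OF cont_weighted, of r] r
      by (auto intro!: derivative_eq_intros G' simp: at_r algebra_simps)
    moreover have "exp (- A r) * (G' r + D r) \<le> exp (- A r) * (a r * (G r + \<kappa>))"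
      using ineq[OF r] by simp
    ultimately show "\<exists>y. (H has_real_derivative y) (at r) \<and> y \<le> 0"
      by (intro exI conjI) (auto simp: algebra_simps)
  next
    show "continuous_on {s..t} H"
      unfolding H_def
      by (intro continuous_intros cont_A cont_G indefinite_integral_continuous_1 cont_weighted
          integrable_continuous_real)
  qed
  also have "H s = G s + \<kappa>" by (simp add: H_def A_def)
  finally have H_le: "H t \<le> G s + \<kappa>" .
  have A_le: "A \<rho> \<le> A t" if "\<rho> \<in> {s..t}" for \<rho>
    unfolding A_def using that a_nonneg
    by (intro integral_subset_le integrable_continuous_real continuous_on_subset[OF cont_a]) auto
  have "integral {s..t} (\<lambda>\<rho>. exp (- A t) * D \<rho>) \<le> integral {s..t} (\<lambda>\<rho>. exp (- A \<rho>) * D \<rho>)"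
    using A_le D_nonneg
    by (intro integral_le integrable_continuous_real continuous_intros cont_D cont_weighted)
       (auto intro: mult_right_mono)
  then have "exp (- A t) * (G t + \<kappa> + integral {s..t} D) \<le> H t"
    by (simp add: H_def algebra_simps)
  with H_le have "exp (- A t) * (G t + \<kappa> + integral {s..t} D) \<le> G s + \<kappa>" by simp
  then show ?thesis by (simp add: A_def exp_minus field_simps)
qed

lemma borel_measurable_ennreal_indicator_Icc:
  fixes f :: "real \<Rightarrow> real"
  assumes "continuous_on {a..b} f"
  shows "(\<lambda>r. ennreal (f r) * indicator {a..b} r) \<in> borel_measurable lborel"
proof -
  have "(\<lambda>r. indicator {a..b} r *\<^sub>R f r) \<in> borel_measurable borel"
    using assms by (intro borel_measurable_continuous_on_indicator) auto
  then have "(\<lambda>r. ennreal (indicator {a..b} r *\<^sub>R f r)) \<in> borel_measurable lborel"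
    by (simp add: measurable_compose[OF _ measurable_ennreal])
  moreover have "(\<lambda>r. ennreal (f r) * indicator {a..b} r) = (\<lambda>r. ennreal (indicator {a..b} r *\<^sub>R f r))"
    by (auto split: split_indicator)
  ultimately show ?thesis by simp
qed

lemma nn_integral_Icc_le_of_integral_bound:
  fixes f :: "real \<Rightarrow> real"
  assumes cont: "continuous_on {0<..t} f" and nonneg: "\<And>r. r \<in> {0<..t} \<Longrightarrow> 0 \<le> f r"
    and bound: "\<And>s. s \<in> {0<..t} \<Longrightarrow> integral {s..t} f \<le> K"
  shows "(\<integral>\<^sup>+r\<in>{0..t}. ennreal (f r) \<partial>lborel) \<le> ennreal K"
proof (cases "0 < t")
  case False
  have "(\<integral>\<^sup>+r\<in>{0..t}. ennreal (f r) \<partial>lborel) = (\<integral>\<^sup>+r. 0 \<partial>(lborel :: real measure))"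
  proof (rule nn_integral_cong_AE)
    show "AE r in lborel. ennreal (f r) * indicator {0..t} r = 0"
      using AE_lborel_singleton[of 0] by eventually_elim (use False in \<open>auto split: split_indicator\<close>)
  qed
  then show ?thesis by simp
next
  case True
  define s where "s n = t / (real n + 1)" for n :: nat
  have s: "s n \<in> {0<..t}" for n
    using True by (auto simp: s_def field_simps)
  define g where "g n r = ennreal (f r) * indicator {s n..t} r" for n r
  have int_g: "integral\<^sup>N lborel (g n) = ennreal (integral {s n..t} f)" for n
  proof -
    have sub: "{s n..t} \<subseteq> {0<..t}" using s[of n] by auto
    show ?thesis
      unfolding g_def using sub nonneg
      by (intro nn_integral_has_integral_lebesgue' integrable_integral integrable_continuous_real
          continuous_on_subset[OF cont]) auto
  qed
  have "g n r \<le> g (Suc n) r" for n r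
  proof -
    have "s (Suc n) \<le> s n" unfolding s_def using True by (intro divide_left_mono) auto
    then show ?thesis by (auto simp: g_def split: split_indicator)
  qed
  then have "incseq g" by (intro incseq_SucI le_funI)
  moreover have "g n \<in> borel_measurable lborel" for n
    unfolding g_def using s[of n]
    by (intro borel_measurable_ennreal_indicator_Icc continuous_on_subset[OF cont]) auto
  moreover have "ennreal (f r) * indicator {0..t} r \<le> (SUP n. g n r)" if "r \<noteq> 0" for r
  proof (cases "r \<in> {0<..t}")
    case True
    obtain n :: nat where "t / r \<le> real n" using real_arch_simple by blast
    then have "s n \<le> r" using True by (auto simp: s_def field_simps)
    then have "g n r = ennreal (f r) * indicator {0..t} r" using True by (simp add: g_def)
    then show ?thesis by (metis SUP_upper UNIV_I)
  qed (use that in \<open>simp split: split_indicator\<close>)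
  ultimately have "(\<integral>\<^sup>+r\<in>{0..t}. ennreal (f r) \<partial>lborel) \<le> (SUP n. integral\<^sup>N lborel (g n))"
    using AE_lborel_singleton[of 0]
    by (subst nn_integral_monotone_convergence_SUP[symmetric])
       (auto intro!: nn_integral_mono_AE elim!: eventually_mono)
  also have "\<dots> \<le> ennreal K"
    using bound[OF s] by (auto intro!: SUP_least simp: int_g ennreal_leI)
  finally show ?thesis .
qed

text \<open>The constant \<open>c\<close> is arbitrary: since \<open>\<integral> u\<^sub>x = 0\<close>, the energy identity holds
  for every \<open>c\<close>; the theorem takes the mean of \<open>v\<^sub>0\<close>.\<close>
locale chemotaxis_solution =
  fixes T :: real and u v ux uxx ut vx vt :: "real \<Rightarrow> real \<Rightarrow> real"
    and \<alpha> \<alpha>' :: "real \<Rightarrow> real" and \<alpha>_low c :: real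
  assumes cont_u: "continuous_on ({0..1} \<times> {0..<T}) (\<lambda>(x, t). u x t)"
    and cont_v: "continuous_on ({0..1} \<times> {0..<T}) (\<lambda>(x, t). v x t)"
    and derivs: "\<forall>x\<in>{0..1}. \<forall>t\<in>{0<..<T}.
           ((\<lambda>y. u y t) has_real_derivative ux x t) (at x within {0..1}) \<and>
           ((\<lambda>y. ux y t) has_real_derivative uxx x t) (at x within {0..1}) \<and>
           ((\<lambda>s. u x s) has_real_derivative ut x t) (at t) \<and>
           ((\<lambda>y. v y t) has_real_derivative vx x t) (at x within {0..1}) \<and>
           ((\<lambda>s. v x s) has_real_derivative vt x t) (at t)"
    and cont_ux: "continuous_on ({0..1} \<times> {0<..<T}) (\<lambda>(x, t). ux x t)"
    and cont_ut: "continuous_on ({0..1} \<times> {0<..<T}) (\<lambda>(x, t). ut x t)"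
    and cont_vt: "continuous_on ({0..1} \<times> {0<..<T}) (\<lambda>(x, t). vt x t)"
    and pde: "\<forall>x\<in>{0<..<1}. \<forall>t\<in>{0<..<T}.
           ut x t - (ux x t * v x t + u x t * vx x t) = uxx x t \<and> vt x t - ux x t = 0"
    and boundary: "\<forall>t\<in>{0..<T}. u 0 t = \<alpha> t \<and> u 1 t = \<alpha> t"
    and u_pos: "\<forall>x\<in>{0..1}. \<forall>t\<in>{0..<T}. 0 < u x t"
    and cont_\<alpha>: "continuous_on {0..} \<alpha>"
    and \<alpha>_deriv: "\<And>t. 0 < t \<Longrightarrow> (\<alpha> has_real_derivative \<alpha>' t) (at t)"
    and cont_\<alpha>': "continuous_on {0<..} \<alpha>'"
    and \<alpha>_low: "0 < \<alpha>_low" "\<forall>t\<ge>0. \<alpha>_low \<le> \<alpha> t"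
begin

lemma \<alpha>_pos: "0 \<le> t \<Longrightarrow> 0 < \<alpha> t"
  using \<alpha>_low by force

lemma u_pos_at: "x \<in> {0..1} \<Longrightarrow> t \<in> {0..<T} \<Longrightarrow> 0 < u x t"
  using u_pos by blast

lemma u_nonzero: "t \<in> {0..<T} \<Longrightarrow> \<forall>x\<in>{0..1}. u x t \<noteq> 0"
  using u_pos by force

lemma cont_sections:
  assumes "t \<in> {0..<T}"
  shows "continuous_on {0..1} (\<lambda>x. u x t)" "continuous_on {0..1} (\<lambda>x. v x t)"
  using continuous_on_section[OF cont_u assms] continuous_on_section[OF cont_v assms] .

lemma cont_ux_section: "t \<in> {0<..<T} \<Longrightarrow> continuous_on {0..1} (\<lambda>x. ux x t)"
  by (rule continuous_on_section[OF cont_ux])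

lemma integral_ux_eq_zero:
  assumes "t \<in> {0<..<T}"
  shows "integral {0..1} (\<lambda>x. ux x t) = 0"
  using assms derivs boundary
  by (intro integral_unique has_integral_derivative_eq_zero[where f = "\<lambda>x. u x t"]) auto

lemma integral_v_const:
  assumes "t \<in> {0..<T}"
  shows "integral {0..1} (\<lambda>x. v x t) = integral {0..1} (\<lambda>x. v x 0)"
proof -
  have deriv_zero: "((\<lambda>s. integral {0..1} (\<lambda>x. v x s)) has_real_derivative 0) (at s)"
    if "0 < s" "s < T" for s
  proof -
    have "integral {0..1} (\<lambda>x. vt x s) = integral {0..1} (\<lambda>x. ux x s)"
      using pde that by (intro integral_Icc_cong_interior) auto
    moreover have "((\<lambda>s. integral {0..1} (\<lambda>x. v x s)) has_real_derivative
                      integral {0..1} (\<lambda>x. vt x s)) (at s)"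
      using derivs cont_vt that
      by (intro has_real_derivative_integral_Icc_param[where U = "{0<..<T}"] cont_sections) auto
    ultimately show ?thesis using integral_ux_eq_zero that by simp
  qed
  have cont: "continuous_on {0..t} (\<lambda>s. integral {0..1} (\<lambda>x. v x s))"
    using assms by (intro continuous_on_integral_Icc_param continuous_on_subset[OF cont_v]) auto
  show ?thesis
  proof (cases "t = 0")
    case False
    with assms have "0 < t" by simp
    then show ?thesis
      using DERIV_isconst_end[of 0 t "\<lambda>s. integral {0..1} (\<lambda>x. v x s)"] deriv_zero cont assms
      by auto
  qed simp
qed

definition energy_density :: "real \<Rightarrow> real \<Rightarrow> real" where
  "energy_density x t = entropy_density (u x t) (\<alpha> t) + (v x t - c)\<^sup>2 / 2"

definition energy :: "real \<Rightarrow> real" where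
  "energy t = integral {0..1} (\<lambda>x. energy_density x t)"

definition dissipation :: "real \<Rightarrow> real" where
  "dissipation t = integral {0..1} (\<lambda>x. (ux x t)\<^sup>2 / u x t)"

lemma cont_entropy_density_section:
  assumes "t \<in> {0..<T}"
  shows "continuous_on {0..1} (\<lambda>x. entropy_density (u x t) (\<alpha> t))"
  unfolding entropy_density_def
  using assms u_nonzero[OF assms] by (intro continuous_intros cont_sections) auto

lemma integrable_energy_density:
  "t \<in> {0..<T} \<Longrightarrow> (\<lambda>x. energy_density x t) integrable_on {0..1}"
  unfolding energy_density_def
  by (intro integrable_continuous_real continuous_intros cont_entropy_density_section cont_sections)
     auto

lemma energy_eq:
  assumes "t \<in> {0..<T}"
  shows "energy t = rel_entropy (\<lambda>x. u x t) (\<alpha> t) + L2norm_sq01 (\<lambda>x. v x t - c) / 2"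
proof -
  have "((\<lambda>x. entropy_density (u x t) (\<alpha> t)) has_integral rel_entropy (\<lambda>x. u x t) (\<alpha> t)) {0..1}"
  proof -
    have "rel_entropy (\<lambda>x. u x t) (\<alpha> t) = integral {0..1} (\<lambda>x. entropy_density (u x t) (\<alpha> t))"
      using assms u_pos_at by (intro rel_entropy_eq_integral cont_sections) auto
    then show ?thesis
      using assms by (simp add: integrable_integral integrable_continuous_real cont_entropy_density_section)
  qed
  moreover have "((\<lambda>x. (v x t - c)\<^sup>2) has_integral L2norm_sq01 (\<lambda>x. v x t - c)) {0..1}"
    using assms
    by (simp add: L2norm_sq01_eq_integral cont_sections integrable_integral integrable_continuous_real
        continuous_intros)
  ultimately show ?thesis
    unfolding energy_def energy_density_def
    by (intro integral_unique has_integral_add has_integral_divide)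
qed

lemma energy_nonneg: "t \<in> {0..<T} \<Longrightarrow> 0 \<le> energy t"
  unfolding energy_def using u_pos_at \<alpha>_pos
  by (intro integral_nonneg integrable_energy_density)
     (auto simp: energy_density_def intro!: add_nonneg_nonneg entropy_density_nonneg)

lemma continuous_on_energy: "continuous_on {0..<T} energy"
proof -
  have cont_\<alpha>_snd: "continuous_on ({0..1} \<times> {0..<T}) (\<lambda>p. \<alpha> (snd p))"
    by (rule continuous_on_compose2[OF cont_\<alpha> continuous_on_snd[OF continuous_on_id]]) auto
  have "\<forall>p\<in>{0..1} \<times> {0..<T}. u (fst p) (snd p) \<noteq> 0 \<and> \<alpha> (snd p) \<noteq> 0"
    using u_pos_at \<alpha>_pos by (force simp: mem_Times_iff)
  then have "continuous_on ({0..1} \<times> {0..<T})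
          (\<lambda>p. entropy_density (u (fst p) (snd p)) (\<alpha> (snd p)) + (v (fst p) (snd p) - c)\<^sup>2 / 2)"
    using cont_u cont_v cont_\<alpha>_snd unfolding entropy_density_def case_prod_unfold
    by (intro continuous_intros) auto
  then show ?thesis
    unfolding energy_def energy_density_def
    by (intro continuous_on_integral_Icc_param) (simp add: case_prod_unfold)
qed

lemma continuous_on_dissipation: "continuous_on {0<..<T} dissipation"
proof -
  have "continuous_on ({0..1} \<times> {0<..<T}) (\<lambda>p. u (fst p) (snd p))"
    by (rule continuous_on_subset[OF cont_u[unfolded case_prod_unfold]]) auto
  moreover have "\<forall>p\<in>{0..1} \<times> {0<..<T}. u (fst p) (snd p) \<noteq> 0"
  proof
    fix p :: "real \<times> real" assume "p \<in> {0..1} \<times> {0<..<T}"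
    then show "u (fst p) (snd p) \<noteq> 0" using u_pos_at[of "fst p" "snd p"] by (auto simp: mem_Times_iff)
  qed
  ultimately have "continuous_on ({0..1} \<times> {0<..<T}) (\<lambda>p. (ux (fst p) (snd p))\<^sup>2 / u (fst p) (snd p))"
    using cont_ux unfolding case_prod_unfold by (intro continuous_intros) auto
  then show ?thesis
    unfolding dissipation_def by (intro continuous_on_integral_Icc_param) (simp add: case_prod_unfold)
qed

lemma integrable_dissipation_density:
  "t \<in> {0<..<T} \<Longrightarrow> (\<lambda>x. (ux x t)\<^sup>2 / u x t) integrable_on {0..1}"
  using u_nonzero[of t]
  by (intro integrable_continuous_real continuous_intros cont_sections cont_ux_section) auto

lemma dissipation_nonneg:
  assumes "t \<in> {0<..<T}"
  shows "0 \<le> dissipation t"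
  unfolding dissipation_def
proof (rule integral_nonneg[OF integrable_dissipation_density[OF assms]])
  fix x :: real assume "x \<in> {0..1}"
  then show "0 \<le> (ux x t)\<^sup>2 / u x t" using u_pos_at assms by (simp add: less_imp_le)
qed

definition energy_density_dt :: "real \<Rightarrow> real \<Rightarrow> real" where
  "energy_density_dt x t = ut x t * (ln (u x t) - ln (\<alpha> t)) - (u x t - \<alpha> t) * (\<alpha>' t / \<alpha> t)
     + (v x t - c) * vt x t"

lemma energy_density_has_derivative:
  assumes "x \<in> {0..1}" "t \<in> {0<..<T}"
  shows "((\<lambda>t. energy_density x t) has_real_derivative energy_density_dt x t) (at t)"
proof -
  have du: "((\<lambda>s. u x s) has_real_derivative ut x t) (at t)"
    and dv: "((\<lambda>s. v x s) has_real_derivative vt x t) (at t)"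
    using derivs assms by blast+
  have "0 < u x t" "0 < \<alpha> t" using u_pos_at \<alpha>_pos assms by auto
  then have "((\<lambda>s. entropy_density (u x s) (\<alpha> s)) has_real_derivative
               ut x t * (ln (u x t) - ln (\<alpha> t)) - (u x t - \<alpha> t) * (\<alpha>' t / \<alpha> t)) (at t)"
    using assms by (intro has_real_derivative_entropy_density du \<alpha>_deriv) auto
  then show ?thesis
    unfolding energy_density_def energy_density_dt_def by (auto intro!: derivative_eq_intros dv)
qed

lemma continuous_on_energy_density_dt:
  "continuous_on ({0..1} \<times> {0<..<T}) (\<lambda>(x, t). energy_density_dt x t)"
proof -
  let ?P = "{0..1} \<times> {0<..<T}"
  have "continuous_on ?P (\<lambda>p. u (fst p) (snd p))"
    by (rule continuous_on_subset[OF cont_u[unfolded case_prod_unfold]]) force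
  moreover have "continuous_on ?P (\<lambda>p. v (fst p) (snd p))"
    by (rule continuous_on_subset[OF cont_v[unfolded case_prod_unfold]]) force
  moreover have "continuous_on ?P (\<lambda>p. \<alpha> (snd p))"
    by (rule continuous_on_compose2[OF cont_\<alpha> continuous_on_snd[OF continuous_on_id]]) auto
  moreover have "continuous_on ?P (\<lambda>p. \<alpha>' (snd p))"
    by (rule continuous_on_compose2[OF cont_\<alpha>' continuous_on_snd[OF continuous_on_id]]) auto
  moreover have "\<forall>p\<in>?P. u (fst p) (snd p) \<noteq> 0 \<and> \<alpha> (snd p) \<noteq> 0"
  proof
    fix p :: "real \<times> real" assume "p \<in> ?P"
    then show "u (fst p) (snd p) \<noteq> 0 \<and> \<alpha> (snd p) \<noteq> 0"
      using u_pos_at[of "fst p" "snd p"] \<alpha>_pos[of "snd p"] by (auto simp: mem_Times_iff)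
  qed
  ultimately show ?thesis
    using cont_ut cont_vt unfolding energy_density_dt_def case_prod_unfold
    by (intro continuous_intros) auto
qed

text \<open>The integrand is the \<open>x\<close>-derivative of \<open>(u\<^sub>x + u v) (ln u - ln \<alpha>)\<close>, and
  \<open>ln u - ln \<alpha>\<close> vanishes at both ends of the interval.\<close>
lemma has_integral_flux_log_ratio_derivative:
  assumes t: "t \<in> {0<..<T}"
  shows "((\<lambda>x. (uxx x t + ux x t * v x t + u x t * vx x t) * (ln (u x t) - ln (\<alpha> t))
            + (ux x t)\<^sup>2 / u x t + v x t * ux x t) has_integral 0) {0..1}"
proof (rule has_integral_derivative_eq_zero
    [where f = "\<lambda>x. (ux x t + u x t * v x t) * (ln (u x t) - ln (\<alpha> t))"])
  show "(ux 0 t + u 0 t * v 0 t) * (ln (u 0 t) - ln (\<alpha> t))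
          = (ux 1 t + u 1 t * v 1 t) * (ln (u 1 t) - ln (\<alpha> t))"
    using boundary t by simp
  fix x :: real assume x: "x \<in> {0..1}"
  have pos: "0 < u x t" using u_pos_at x t by simp
  have du: "((\<lambda>y. u y t) has_real_derivative ux x t) (at x within {0..1})"
    and dux: "((\<lambda>y. ux y t) has_real_derivative uxx x t) (at x within {0..1})"
    and dv: "((\<lambda>y. v y t) has_real_derivative vx x t) (at x within {0..1})"
    using derivs x t by blast+
  show "((\<lambda>x. (ux x t + u x t * v x t) * (ln (u x t) - ln (\<alpha> t))) has_real_derivative
          (uxx x t + ux x t * v x t + u x t * vx x t) * (ln (u x t) - ln (\<alpha> t))
            + (ux x t)\<^sup>2 / u x t + v x t * ux x t) (at x within {0..1})"
    apply (rule derivative_eq_intros du dux dv refl pos)+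
    using pos by (simp add: field_simps power2_eq_square)
qed simp

text \<open>Substituting the equations, the convective terms \<open>v u\<^sub>x\<close> from the two of them cancel.\<close>
lemma integral_energy_density_dt:
  assumes t: "t \<in> {0<..<T}"
  shows "integral {0..1} (\<lambda>x. energy_density_dt x t)
         = - dissipation t - (integral {0..1} (\<lambda>x. u x t) - \<alpha> t) * (\<alpha>' t / \<alpha> t)"
proof -
  define g where "g x = (uxx x t + ux x t * v x t + u x t * vx x t) * (ln (u x t) - ln (\<alpha> t))
                          + (ux x t)\<^sup>2 / u x t + v x t * ux x t" for x
  have "(g has_integral 0) {0..1}"
    unfolding g_def by (rule has_integral_flux_log_ratio_derivative[OF t])
  moreover have "((\<lambda>x. (ux x t)\<^sup>2 / u x t) has_integral dissipation t) {0..1}"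
    unfolding dissipation_def by (intro integrable_integral integrable_dissipation_density t)
  moreover have "((\<lambda>x. (u x t - \<alpha> t) * (\<alpha>' t / \<alpha> t)) has_integral
                   (integral {0..1} (\<lambda>x. u x t) - \<alpha> t) * (\<alpha>' t / \<alpha> t)) {0..1}"
    using has_integral_const_real[of "\<alpha> t" 0 1] cont_sections(1) t
    by (intro has_integral_mult_left has_integral_diff integrable_integral integrable_continuous_real)
       auto
  moreover have "((\<lambda>x. c * ux x t) has_integral c * 0) {0..1}"
    using derivs boundary t
    by (intro has_integral_mult_right has_integral_derivative_eq_zero[where f = "\<lambda>x. u x t"]) auto
  ultimately have "((\<lambda>x. g x - (ux x t)\<^sup>2 / u x t - (u x t - \<alpha> t) * (\<alpha>' t / \<alpha> t) - c * ux x t)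
      has_integral 0 - dissipation t - (integral {0..1} (\<lambda>x. u x t) - \<alpha> t) * (\<alpha>' t / \<alpha> t) - c * 0)
      {0..1}"
    by (intro has_integral_diff)
  moreover have "integral {0..1} (\<lambda>x. energy_density_dt x t) = integral {0..1}
      (\<lambda>x. g x - (ux x t)\<^sup>2 / u x t - (u x t - \<alpha> t) * (\<alpha>' t / \<alpha> t) - c * ux x t)"
    using pde t unfolding g_def energy_density_dt_def
    by (intro integral_Icc_cong_interior) (auto simp: algebra_simps)
  ultimately show ?thesis by (simp add: integral_unique)
qed

lemma energy_has_derivative:
  assumes t: "t \<in> {0<..<T}"
  shows "(energy has_real_derivative
           - dissipation t - (integral {0..1} (\<lambda>x. u x t) - \<alpha> t) * (\<alpha>' t / \<alpha> t)) (at t)"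
proof -
  have "(energy has_real_derivative integral {0..1} (\<lambda>x. energy_density_dt x t)) (at t)"
    unfolding energy_def
  proof (rule has_real_derivative_integral_Icc_param[OF _ _ t _ _ continuous_on_energy_density_dt])
    show "continuous_on {0..1} (\<lambda>x. energy_density x s)" if "s \<in> {0<..<T}" for s
      using that unfolding energy_density_def
      by (intro continuous_intros cont_entropy_density_section cont_sections) auto
  qed (auto intro: energy_density_has_derivative)
  then show ?thesis using integral_energy_density_dt[OF t] by simp
qed

lemma mass_deviation_le_energy:
  assumes t: "t \<in> {0..<T}"
  shows "\<bar>integral {0..1} (\<lambda>x. u x t) - \<alpha> t\<bar> \<le> energy t + exp 2 * \<alpha> t"
proof -
  have int_u: "(\<lambda>x. u x t) integrable_on {0..1}"
    by (intro integrable_continuous_real cont_sections t)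
  have "\<bar>integral {0..1} (\<lambda>x. u x t) - \<alpha> t\<bar> = norm (integral {0..1} (\<lambda>x. u x t - \<alpha> t))"
    using integral_diff[OF int_u integrable_const_ivl[of "\<alpha> t" 0 1]] by simp
  also have "\<dots> \<le> integral {0..1}
      (\<lambda>x. energy_density x t + exp 2 * \<alpha> t)"
  proof (rule integral_norm_bound_integral)
    show "(\<lambda>x. u x t - \<alpha> t) integrable_on {0..1}" using int_u by (intro integrable_diff) auto
    show "(\<lambda>x. energy_density x t + exp 2 * \<alpha> t) integrable_on {0..1}"
      using t by (intro integrable_add integrable_energy_density) auto
    fix x :: real assume "x \<in> {0..1}"
    then have "\<bar>u x t - \<alpha> t\<bar> \<le> entropy_density (u x t) (\<alpha> t) + exp 2 * \<alpha> t"
      using u_pos_at \<alpha>_pos t by (intro abs_diff_le_entropy_density) auto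
    then show "norm (u x t - \<alpha> t) \<le> energy_density x t + exp 2 * \<alpha> t"
      using zero_le_power2[of "v x t - c"] unfolding real_norm_def energy_density_def by linarith
  qed
  also have "\<dots> = energy t + exp 2 * \<alpha> t"
    unfolding energy_def using t
    by (subst integral_add[OF integrable_energy_density integrable_const_ivl]) auto
  finally show ?thesis .
qed

lemma energy_dissipation_inequality:
  assumes t: "t \<in> {0<..<T}"
  shows "- ((integral {0..1} (\<lambda>x. u x t) - \<alpha> t) * (\<alpha>' t / \<alpha> t))
           \<le> \<bar>\<alpha>' t\<bar> / \<alpha>_low * (energy t + exp 2 * \<alpha>_low)"
proof -
  have t0: "t \<in> {0..<T}" and \<alpha>t: "0 < \<alpha> t" "\<alpha>_low \<le> \<alpha> t" using t \<alpha>_pos \<alpha>_low by auto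
  have "- ((integral {0..1} (\<lambda>x. u x t) - \<alpha> t) * (\<alpha>' t / \<alpha> t))
          \<le> \<bar>integral {0..1} (\<lambda>x. u x t) - \<alpha> t\<bar> * (\<bar>\<alpha>' t\<bar> / \<alpha> t)"
  proof -
    have "- ((integral {0..1} (\<lambda>x. u x t) - \<alpha> t) * (\<alpha>' t / \<alpha> t))
            \<le> \<bar>(integral {0..1} (\<lambda>x. u x t) - \<alpha> t) * (\<alpha>' t / \<alpha> t)\<bar>"
      by linarith
    then show ?thesis using \<alpha>t by (simp add: abs_mult)
  qed
  also have "\<dots> \<le> (energy t + exp 2 * \<alpha> t) * (\<bar>\<alpha>' t\<bar> / \<alpha> t)"
    using \<alpha>t by (intro mult_right_mono mass_deviation_le_energy t0) auto
  also have "\<dots> = energy t * (\<bar>\<alpha>' t\<bar> / \<alpha> t) + exp 2 * \<bar>\<alpha>' t\<bar>"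
    using \<alpha>t by (simp add: field_simps)
  also have "energy t * (\<bar>\<alpha>' t\<bar> / \<alpha> t) \<le> energy t * (\<bar>\<alpha>' t\<bar> / \<alpha>_low)"
    using \<alpha>t \<alpha>_low(1) energy_nonneg[OF t0]
    by (intro mult_left_mono divide_left_mono) auto
  finally show ?thesis using \<alpha>_low(1) by (simp add: field_simps)
qed

lemma energy_gronwall:
  assumes "0 < s" "s \<le> t" "t < T"
  shows "energy t + exp 2 * \<alpha>_low + integral {s..t} dissipation
           \<le> exp (integral {s..t} (\<lambda>r. \<bar>\<alpha>' r\<bar>) / \<alpha>_low) * (energy s + exp 2 * \<alpha>_low)"
proof -
  have sub: "{s..t} \<subseteq> {0<..<T}" using assms by auto
  have "energy t + exp 2 * \<alpha>_low + integral {s..t} dissipation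
          \<le> exp (integral {s..t} (\<lambda>r. \<bar>\<alpha>' r\<bar> / \<alpha>_low)) * (energy s + exp 2 * \<alpha>_low)"
  proof (rule gronwall_dissipation[OF \<open>s \<le> t\<close>])
    show "continuous_on {s..t} energy"
      using sub by (intro continuous_on_subset[OF continuous_on_energy]) auto
    show "continuous_on {s..t} (\<lambda>r. \<bar>\<alpha>' r\<bar> / \<alpha>_low)"
      using sub \<alpha>_low(1) by (intro continuous_intros continuous_on_subset[OF cont_\<alpha>']) auto
    show "continuous_on {s..t} dissipation"
      using sub by (intro continuous_on_subset[OF continuous_on_dissipation])
    show "0 \<le> dissipation r" if "r \<in> {s..t}" for r
      using sub that by (intro dissipation_nonneg) auto
    fix r assume "s < r" "r < t"
    then have r: "r \<in> {0<..<T}" using assms by auto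
    show "(energy has_real_derivative
            - dissipation r - (integral {0..1} (\<lambda>x. u x r) - \<alpha> r) * (\<alpha>' r / \<alpha> r)) (at r)"
      by (rule energy_has_derivative[OF r])
    show "- dissipation r - (integral {0..1} (\<lambda>x. u x r) - \<alpha> r) * (\<alpha>' r / \<alpha> r) + dissipation r
            \<le> \<bar>\<alpha>' r\<bar> / \<alpha>_low * (energy r + exp 2 * \<alpha>_low)"
      using energy_dissipation_inequality[OF r] by linarith
  qed (use \<alpha>_low in auto)
  then show ?thesis by simp
qed

lemma energy_dissipation_bound:
  assumes L: "\<And>s t. 0 < s \<Longrightarrow> s \<le> t \<Longrightarrow> t < T \<Longrightarrow> integral {s..t} (\<lambda>r. \<bar>\<alpha>' r\<bar>) \<le> L"
    and s: "0 < s" "s \<le> t" and t: "t < T"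
  shows "energy t + integral {s..t} dissipation \<le> exp (L / \<alpha>_low) * (energy 0 + exp 2 * \<alpha>_low)"
proof -
  let ?\<kappa> = "exp 2 * \<alpha>_low"
  have "(energy \<longlongrightarrow> energy 0) (at_right 0)"
    using s t by (intro continuous_on_Icc_at_rightD continuous_on_subset[OF continuous_on_energy]) auto
  then have "((\<lambda>s'. exp (L / \<alpha>_low) * (energy s' + ?\<kappa>)) \<longlongrightarrow>
               exp (L / \<alpha>_low) * (energy 0 + ?\<kappa>)) (at_right 0)"
    by (intro tendsto_intros)
  moreover have "\<forall>\<^sub>F s' in at_right 0.
      energy t + ?\<kappa> + integral {s..t} dissipation \<le> exp (L / \<alpha>_low) * (energy s' + ?\<kappa>)"
  proof (rule eventually_at_rightI[OF _ \<open>0 < s\<close>])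
    fix s' assume s': "s' \<in> {0<..<s}"
    have "integral {s..t} dissipation \<le> integral {s'..t} dissipation"
      using s s' t
      by (intro integral_subset_le integrable_continuous_real ballI dissipation_nonneg
          continuous_on_subset[OF continuous_on_dissipation]) auto
    also have "energy t + ?\<kappa> + integral {s'..t} dissipation
        \<le> exp (integral {s'..t} (\<lambda>r. \<bar>\<alpha>' r\<bar>) / \<alpha>_low) * (energy s' + ?\<kappa>)"
      using s s' t by (intro energy_gronwall) auto
    also have "\<dots> \<le> exp (L / \<alpha>_low) * (energy s' + ?\<kappa>)"
      using s s' t \<alpha>_low energy_nonneg[of s'] L[of s' t]
      by (intro mult_right_mono) (auto intro: divide_right_mono)
    finally show "energy t + ?\<kappa> + integral {s..t} dissipation \<le> exp (L / \<alpha>_low) * (energy s' + ?\<kappa>)"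
      by simp
  qed
  ultimately have "energy t + ?\<kappa> + integral {s..t} dissipation \<le> exp (L / \<alpha>_low) * (energy 0 + ?\<kappa>)"
    by (intro tendsto_lowerbound) auto
  moreover have "0 < ?\<kappa>" using \<alpha>_low(1) by simp
  ultimately show ?thesis by linarith
qed

lemma nn_integral_deriv_eq_dissipation:
  assumes \<tau>: "\<tau> \<in> {0<..<T}"
  shows "(\<integral>\<^sup>+x\<in>{0..1}. ennreal ((deriv (\<lambda>y. u y \<tau>) x)\<^sup>2 / u x \<tau>) \<partial>lborel) = ennreal (dissipation \<tau>)"
proof -
  have "(\<integral>\<^sup>+x\<in>{0..1}. ennreal ((deriv (\<lambda>y. u y \<tau>) x)\<^sup>2 / u x \<tau>) \<partial>lborel)
      = (\<integral>\<^sup>+x\<in>{0..1}. ennreal ((ux x \<tau>)\<^sup>2 / u x \<tau>) \<partial>lborel)"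
  proof (rule nn_integral_cong_AE)
    have deriv_eq: "deriv (\<lambda>y. u y \<tau>) x = ux x \<tau>" if "0 < x" "x < 1" for x
    proof (rule DERIV_imp_deriv)
      have "((\<lambda>y. u y \<tau>) has_real_derivative ux x \<tau>) (at x within {0..1})" using derivs that \<tau> by auto
      then show "((\<lambda>y. u y \<tau>) has_real_derivative ux x \<tau>) (at x)"
        using that by (simp add: at_within_Icc_at)
    qed
    show "AE x in lborel. ennreal ((deriv (\<lambda>y. u y \<tau>) x)\<^sup>2 / u x \<tau>) * indicator {0..1} x
                 = ennreal ((ux x \<tau>)\<^sup>2 / u x \<tau>) * indicator {0..1} x"
      using AE_lborel_singleton[of 0] AE_lborel_singleton[of 1]
      by eventually_elim (auto simp: deriv_eq split: split_indicator)
  qed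
  also have "\<dots> = ennreal (dissipation \<tau>)"
    unfolding dissipation_def using u_pos_at \<tau>
    by (intro nn_integral_has_integral_lebesgue' integrable_integral integrable_dissipation_density)
       (auto simp: less_imp_le)
  finally show ?thesis .
qed

lemma dissipation_nn_integral_bound:
  assumes L: "\<And>s t. 0 < s \<Longrightarrow> s \<le> t \<Longrightarrow> t < T \<Longrightarrow> integral {s..t} (\<lambda>r. \<bar>\<alpha>' r\<bar>) \<le> L"
    and t: "t \<in> {0..<T}"
  shows "(\<integral>\<^sup>+\<tau>\<in>{0..t}. (\<integral>\<^sup>+x\<in>{0..1}. ennreal ((deriv (\<lambda>y. u y \<tau>) x)\<^sup>2 / u x \<tau>) \<partial>lborel) \<partial>lborel)
           \<le> ennreal (exp (L / \<alpha>_low) * (energy 0 + exp 2 * \<alpha>_low))"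
proof -
  have "(\<integral>\<^sup>+\<tau>\<in>{0..t}. (\<integral>\<^sup>+x\<in>{0..1}. ennreal ((deriv (\<lambda>y. u y \<tau>) x)\<^sup>2 / u x \<tau>) \<partial>lborel) \<partial>lborel)
      = (\<integral>\<^sup>+\<tau>\<in>{0..t}. ennreal (dissipation \<tau>) \<partial>lborel)"
    using AE_lborel_singleton[of 0] t
    by (intro nn_integral_cong_AE) (auto elim!: eventually_mono split: split_indicator
        simp: nn_integral_deriv_eq_dissipation)
  also have "\<dots> \<le> ennreal (exp (L / \<alpha>_low) * (energy 0 + exp 2 * \<alpha>_low))"
  proof (rule nn_integral_Icc_le_of_integral_bound)
    show "continuous_on {0<..t} dissipation"
      using t by (intro continuous_on_subset[OF continuous_on_dissipation]) auto
    show "0 \<le> dissipation r" if "r \<in> {0<..t}" for r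
      using that t by (intro dissipation_nonneg) auto
    show "integral {s..t} dissipation \<le> exp (L / \<alpha>_low) * (energy 0 + exp 2 * \<alpha>_low)"
      if "s \<in> {0<..t}" for s
      using energy_dissipation_bound[OF L, of s t] energy_nonneg[OF t] that t by auto
  qed
  finally show ?thesis .
qed

lemma energy_bound:
  assumes L: "\<And>s t. 0 < s \<Longrightarrow> s \<le> t \<Longrightarrow> t < T \<Longrightarrow> integral {s..t} (\<lambda>r. \<bar>\<alpha>' r\<bar>) \<le> L"
    and "0 \<le> L" and t: "t \<in> {0..<T}"
  shows "energy t \<le> exp (L / \<alpha>_low) * (energy 0 + exp 2 * \<alpha>_low)"
proof (cases "t = 0")
  case True
  have "1 * (energy 0 + exp 2 * \<alpha>_low) \<le> exp (L / \<alpha>_low) * (energy 0 + exp 2 * \<alpha>_low)"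
    using \<open>0 \<le> L\<close> \<alpha>_low(1) energy_nonneg[OF t[unfolded True]] by (intro mult_right_mono) auto
  moreover have "0 < exp 2 * \<alpha>_low" using \<alpha>_low(1) by simp
  ultimately show ?thesis using True by simp
next
  case False
  with t have "energy t + integral {t..t} dissipation \<le> exp (L / \<alpha>_low) * (energy 0 + exp 2 * \<alpha>_low)"
    by (intro energy_dissipation_bound[OF L]) auto
  then show ?thesis by simp
qed

lemma entropy_estimate:
  assumes L: "\<And>s t. 0 < s \<Longrightarrow> s \<le> t \<Longrightarrow> t < T \<Longrightarrow> integral {s..t} (\<lambda>r. \<bar>\<alpha>' r\<bar>) \<le> L"
    and "0 \<le> L" and t: "t \<in> {0..<T}"
  defines "K \<equiv> exp (L / \<alpha>_low) * (energy 0 + exp 2 * \<alpha>_low)"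
  shows "ennreal (rel_entropy (\<lambda>x. u x t) (\<alpha> t) + L2norm_sq01 (\<lambda>x. v x t - c))
           + (\<integral>\<^sup>+\<tau>\<in>{0..t}. (\<integral>\<^sup>+x\<in>{0..1}. ennreal ((deriv (\<lambda>y. u y \<tau>) x)\<^sup>2 / u x \<tau>) \<partial>lborel) \<partial>lborel)
         \<le> ennreal (3 * K)"
proof -
  have "0 \<le> K" unfolding K_def using energy_nonneg[of 0] t \<alpha>_low(1) by simp
  have "0 \<le> rel_entropy (\<lambda>x. u x t) (\<alpha> t)"
    using t u_pos_at \<alpha>_pos by (intro rel_entropy_nonneg) auto
  then have "rel_entropy (\<lambda>x. u x t) (\<alpha> t) + L2norm_sq01 (\<lambda>x. v x t - c) \<le> 2 * K"
    using energy_eq[OF t] energy_bound[OF L \<open>0 \<le> L\<close> t] unfolding K_def by linarith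
  then have "ennreal (rel_entropy (\<lambda>x. u x t) (\<alpha> t) + L2norm_sq01 (\<lambda>x. v x t - c))
           + (\<integral>\<^sup>+\<tau>\<in>{0..t}. (\<integral>\<^sup>+x\<in>{0..1}. ennreal ((deriv (\<lambda>y. u y \<tau>) x)\<^sup>2 / u x \<tau>) \<partial>lborel) \<partial>lborel)
         \<le> ennreal (2 * K) + ennreal K"
    using dissipation_nn_integral_bound[OF L t] unfolding K_def by (intro add_mono ennreal_leI)
  also have "\<dots> = ennreal (3 * K)" using \<open>0 \<le> K\<close> by (simp flip: ennreal_plus)
  finally show ?thesis .
qed

context
  fixes u0 v0 :: "real \<Rightarrow> real"
  assumes init: "\<forall>x\<in>{0..1}. u x 0 = u0 x \<and> v x 0 = v0 x"
begin

lemma energy_0_eq_initial: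
  assumes "0 < T"
  shows "energy 0 = rel_entropy u0 (\<alpha> 0) + L2norm_sq01 (\<lambda>x. v0 x - c) / 2"
proof -
  have "rel_entropy (\<lambda>x. u x 0) (\<alpha> 0) = rel_entropy u0 (\<alpha> 0)"
    "L2norm_sq01 (\<lambda>x. v x 0 - c) = L2norm_sq01 (\<lambda>x. v0 x - c)"
    using init by (auto intro: rel_entropy_cong L2norm_sq01_cong)
  then show ?thesis using energy_eq[of 0] assms by simp
qed

lemma set_integral_v_eq_initial:
  assumes t: "t \<in> {0..<T}"
  shows "(LBINT x:{0..1}. v x t) = (LBINT x:{0..1}. v0 x)"
proof -
  have "(LBINT x:{0..1}. v x t) = integral {0..1} (\<lambda>x. v x t)"
    by (rule set_integral_Icc_eq_integral[OF cont_sections(2)[OF t]])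
  also have "\<dots> = integral {0..1} (\<lambda>x. v x 0)" by (rule integral_v_const[OF t])
  also have "\<dots> = (LBINT x:{0..1}. v x 0)"
    using t by (intro set_integral_Icc_eq_integral[symmetric] cont_sections) auto
  also have "\<dots> = (LBINT x:{0..1}. v0 x)" using init by (intro set_lebesgue_integral_cong) auto
  finally show ?thesis .
qed

end

end

lemma boundary_datum_regularity:
  fixes \<alpha> :: "real \<Rightarrow> real" and \<alpha>d :: "nat \<Rightarrow> real \<Rightarrow> real"
  assumes d0: "\<forall>t\<ge>0. \<alpha>d 0 t = \<alpha> t"
    and d: "\<forall>k. \<forall>t\<ge>0. (\<alpha>d k has_real_derivative \<alpha>d (Suc k) t) (at t within {0..})"
  shows "continuous_on {0..} \<alpha>" "\<And>t. 0 < t \<Longrightarrow> (\<alpha> has_real_derivative \<alpha>d 1 t) (at t)"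
    and "continuous_on {0..} (\<alpha>d 1)"
proof -
  have cont: "continuous_on {0..} (\<alpha>d k)" for k
  proof (rule DERIV_continuous_on)
    fix t :: real assume "t \<in> {0..}"
    then show "(\<alpha>d k has_real_derivative \<alpha>d (Suc k) t) (at t within {0..})" using d by simp
  qed
  show "continuous_on {0..} \<alpha>"
    by (rule continuous_on_eq[OF cont[of 0]]) (use d0 in simp)
  show "continuous_on {0..} (\<alpha>d 1)" by (rule cont)
  fix t :: real assume t: "0 < t"
  have "(\<alpha>d 0 has_real_derivative \<alpha>d 1 t) (at t within {0..})" using d t by simp
  then have "(\<alpha>d 0 has_real_derivative \<alpha>d 1 t) (at t within {0<..})"
    by (rule DERIV_subset) auto
  then have "(\<alpha>d 0 has_real_derivative \<alpha>d 1 t) (at t)"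
    using at_within_open[of t "{0<..}"] t by simp
  then show "(\<alpha> has_real_derivative \<alpha>d 1 t) (at t)"
    by (rule has_field_derivative_transform_within_open[where S = "{0<..}"]) (use d0 t in auto)
qed

lemma classical_solution_chemotaxis_solution:
  assumes "classical_solution T u0 v0 \<alpha> u v" "\<forall>x\<in>{0..1}. \<forall>t\<in>{0..<T}. 0 < u x t"
    and "continuous_on {0..} \<alpha>" "\<And>t. 0 < t \<Longrightarrow> (\<alpha> has_real_derivative \<alpha>' t) (at t)"
    and "continuous_on {0<..} \<alpha>'" "0 < \<alpha>_low" "\<forall>t\<ge>0. \<alpha>_low \<le> \<alpha> t"
  obtains ux uxx ut vx vt where "chemotaxis_solution T u v ux uxx ut vx vt \<alpha> \<alpha>' \<alpha>_low"
proof -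
  from assms(1) obtain ux uxx ut vx vt where
    "continuous_on ({0..1} \<times> {0..<T}) (\<lambda>(x, t). u x t)"
    "continuous_on ({0..1} \<times> {0..<T}) (\<lambda>(x, t). v x t)"
    "\<forall>x\<in>{0..1}. \<forall>t\<in>{0<..<T}.
       ((\<lambda>y. u y t) has_real_derivative ux x t) (at x within {0..1}) \<and>
       ((\<lambda>y. ux y t) has_real_derivative uxx x t) (at x within {0..1}) \<and>
       ((\<lambda>s. u x s) has_real_derivative ut x t) (at t) \<and>
       ((\<lambda>y. v y t) has_real_derivative vx x t) (at x within {0..1}) \<and>
       ((\<lambda>s. v x s) has_real_derivative vt x t) (at t)"
    "continuous_on ({0..1} \<times> {0<..<T}) (\<lambda>(x, t). ux x t)"
    "continuous_on ({0..1} \<times> {0<..<T}) (\<lambda>(x, t). ut x t)"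
    "continuous_on ({0..1} \<times> {0<..<T}) (\<lambda>(x, t). vt x t)"
    "\<forall>x\<in>{0<..<1}. \<forall>t\<in>{0<..<T}.
       ut x t - (ux x t * v x t + u x t * vx x t) = uxx x t \<and> vt x t - ux x t = 0"
    "\<forall>t\<in>{0..<T}. u 0 t = \<alpha> t \<and> u 1 t = \<alpha> t"
    unfolding classical_solution_def by blast
  with assms(2-) show thesis by (intro that) (unfold_locales; assumption)
qed

theorem mainTheorem9:
  fixes u0 v0 \<alpha> :: "real \<Rightarrow> real"
    and \<alpha>d :: "nat \<Rightarrow> real \<Rightarrow> real"
    and \<alpha>low :: real
  assumes u0_pos: "\<forall>x\<in>{0..1}. u0 x > 0"
    and u0_H2: "H2_01 u0" and v0_H2: "H2_01 v0"
    and compat: "u0 0 = \<alpha> 0" "u0 1 = \<alpha> 0"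
    and alpha_d0: "\<forall>t\<ge>0. \<alpha>d 0 t = \<alpha> t"
    and alpha_smooth: "\<forall>k. \<forall>t\<ge>0. (\<alpha>d k has_real_derivative \<alpha>d (Suc k) t) (at t within {0..})"
    and alpha_low: "\<alpha>low > 0" "\<forall>t\<ge>0. \<alpha> t \<ge> \<alpha>low"
    and alpha_W11: "set_integrable lborel {0..} (\<alpha>d 1)" "set_integrable lborel {0..} (\<alpha>d 2)"
  shows "\<exists>C>0. \<forall>T u v.
           classical_solution T u0 v0 \<alpha> u v \<and> (\<forall>x\<in>{0..1}. \<forall>t\<in>{0..<T}. u x t > 0) \<longrightarrow>
           (\<forall>t\<in>{0..<T}.
              (LBINT x:{0..1}. v x t) = (LBINT x:{0..1}. v0 x) \<and>
              ennreal (rel_entropy (\<lambda>x. u x t) (\<alpha> t)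
                       + L2norm_sq01 (\<lambda>x. v x t - (LBINT y:{0..1}. v0 y)))
              + (\<integral>\<^sup>+\<tau>\<in>{0..t}. (\<integral>\<^sup>+x\<in>{0..1}.
                    ennreal ((deriv (\<lambda>y. u y \<tau>) x)\<^sup>2 / u x \<tau>) \<partial>lborel) \<partial>lborel)
              \<le> ennreal C)"
proof -
  \<comment> \<open>The \<open>H\<^sup>2\<close> regularity and compatibility of the data, and the integrability of
    \<open>\<alpha>''\<close>, serve the existence of the classical solution, which is assumed here.\<close>
  define L where "L = (LBINT x:{0..}. \<bar>\<alpha>d 1 x\<bar>)"
  define K where "K = exp (L / \<alpha>low) * (rel_entropy u0 (\<alpha> 0)
    + L2norm_sq01 (\<lambda>x. v0 x - (LBINT y:{0..1}. v0 y)) / 2 + exp 2 * \<alpha>low)"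
  note \<alpha>_reg = boundary_datum_regularity[OF alpha_d0 alpha_smooth]
  have "continuous_on {0<..} (\<alpha>d 1)" by (rule continuous_on_subset[OF \<alpha>_reg(3)]) auto
  have "0 \<le> L" unfolding L_def set_lebesgue_integral_def by (intro integral_nonneg_AE AE_I2) simp
  have "0 < \<alpha> 0" using alpha_low by force
  then have "0 < K"
    unfolding K_def using u0_pos alpha_low(1)
    by (intro mult_pos_pos add_nonneg_pos add_nonneg_nonneg rel_entropy_nonneg divide_nonneg_pos
        L2norm_sq01_nonneg) auto
  show ?thesis
  proof (intro exI[of _ "3 * K"] conjI allI impI ballI)
    fix T u v t
    assume sol: "classical_solution T u0 v0 \<alpha> u v \<and> (\<forall>x\<in>{0..1}. \<forall>t\<in>{0..<T}. 0 < u x t)"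
      and t: "t \<in> {0..<T}"
    obtain ux uxx ut vx vt where "chemotaxis_solution T u v ux uxx ut vx vt \<alpha> (\<alpha>d 1) \<alpha>low"
      using sol \<alpha>_reg(1,2) \<open>continuous_on {0<..} (\<alpha>d 1)\<close> alpha_low
      by (elim conjE classical_solution_chemotaxis_solution)
    then interpret S: chemotaxis_solution T u v ux uxx ut vx vt \<alpha> "\<alpha>d 1" \<alpha>low "LBINT y:{0..1}. v0 y" .
    have init: "\<forall>x\<in>{0..1}. u x 0 = u0 x \<and> v x 0 = v0 x"
      using sol by (simp add: classical_solution_def)
    have L_bound: "integral {s..r} (\<lambda>r. \<bar>\<alpha>d 1 r\<bar>) \<le> L" if "0 < s" "s \<le> r" for s r
      unfolding L_def using alpha_W11(1) that
      by (intro integral_abs_le_set_integral_Ici continuous_on_subset[OF \<alpha>_reg(3)]) auto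
    show "(LBINT x:{0..1}. v x t) = (LBINT x:{0..1}. v0 x)"
      by (rule S.set_integral_v_eq_initial[OF init t])
    show "ennreal (rel_entropy (\<lambda>x. u x t) (\<alpha> t) + L2norm_sq01 (\<lambda>x. v x t - (LBINT y:{0..1}. v0 y)))
        + (\<integral>\<^sup>+\<tau>\<in>{0..t}. (\<integral>\<^sup>+x\<in>{0..1}.
            ennreal ((deriv (\<lambda>y. u y \<tau>) x)\<^sup>2 / u x \<tau>) \<partial>lborel) \<partial>lborel)
        \<le> ennreal (3 * K)"
      using S.entropy_estimate[OF L_bound \<open>0 \<le> L\<close> t] S.energy_0_eq_initial[OF init] t
      by (simp add: K_def)
  qed (use \<open>0 < K\<close> in simp)
qed

end
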